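(* Let $M$ be a totally ordered finite monoid and $a,b,c\in M$ with $b\le_J a$. If $abc=ab$ then $bc=b$. Similarly, if $cba=ba$ then $cb=b$.
   Context: For $m$ in a monoid $M$, $J(m)=\{xmy:x,y\in M\}$. Write $a\le_J b$ iff $J(a)\subseteq J(b)$. A monoid $M$ is totally ordered if for all $a,b\in M$, $J(ab)=J(a)$ or $J(ab)=J(b)$. *)

theory Defs
  imports Main
begin

definition Jideal :: "'a::monoid_mult \<Rightarrow> 'a set" where
  "Jideal m = {x * m * y | x y. True}"

definition J_le :: "'a::monoid_mult \<Rightarrow> 'a \<Rightarrow> bool" where
  "J_le a b \<longleftrightarrow> Jideal a \<subseteq> Jideal b"

definition totally_ordered_monoid :: "'a::monoid_mult itself \<Rightarrow> bool" where
  "totally_ordered_monoid _ \<longleftrightarrow>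
     (\<forall>a b :: 'a. Jideal (a * b) = Jideal a \<or> Jideal (a * b) = Jideal b)"

end

theory Submission
  imports Defs
begin

text \<open>In a totally ordered monoid \<open>J(ab)\<close> is \<open>J(a)\<close> or \<open>J(b)\<close>, so \<open>b \<le>\<^sub>J a\<close> gives
  \<open>b = p(ab)q\<close>. Finite monoids are stable: iterating \<open>b = (pa) b q\<close> and choosing
  \<open>i < j\<close> with \<open>(pa)\<^sup>i = (pa)\<^sup>j\<close> shows that some positive power of \<open>pa\<close> fixes \<open>b\<close>
  from the left, so \<open>b = u(ab)\<close>. Then \<open>abc = ab\<close> gives \<open>bc = u(abc) = u(ab) = b\<close>.
  The second claim is the left-right dual.\<close>

lemma mem_Jideal_self: "m \<in> Jideal m"
proof -
  have "m = 1 * m * 1" by simp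
  then show ?thesis unfolding Jideal_def by blast
qed

lemma Jideal_subset_iff: "Jideal a \<subseteq> Jideal b \<longleftrightarrow> a \<in> Jideal b"
proof
  assume "a \<in> Jideal b"
  then obtain p q where a: "a = p * b * q" unfolding Jideal_def by blast
  show "Jideal a \<subseteq> Jideal b"
  proof
    fix z assume "z \<in> Jideal a"
    then obtain x y where "z = x * a * y" unfolding Jideal_def by blast
    then have "z = (x * p) * b * (q * y)" by (simp add: a mult.assoc)
    then show "z \<in> Jideal b" unfolding Jideal_def by blast
  qed
qed (use mem_Jideal_self in blast)

lemma J_le_iff: "J_le a b \<longleftrightarrow> (\<exists>p q. a = p * b * q)"
  unfolding J_le_def Jideal_subset_iff by (simp add: Jideal_def)

lemma J_le_mult_of_totally_ordered:
  fixes a b :: "'a::monoid_mult"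
  assumes tot: "totally_ordered_monoid TYPE('a)" and ba: "J_le b a"
  shows "J_le b (a * b)" and "J_le b (b * a)"
proof -
  have "Jideal (x * y) = Jideal x \<or> Jideal (x * y) = Jideal y" for x y :: 'a
    using tot unfolding totally_ordered_monoid_def by blast
  from this[of a b] this[of b a] ba
  show "J_le b (a * b)" and "J_le b (b * a)" unfolding J_le_def by auto
qed

lemma two_sided_fix_power:
  fixes b x y :: "'a::monoid_mult"
  assumes "b = x * b * y"
  shows "b = x ^ n * b * y ^ n"
proof (induction n)
  case (Suc n)
  have "x ^ Suc n * b * y ^ Suc n = x ^ n * (x * b * y) * y ^ n"
    by (simp only: power_Suc2[of x] power_Suc[of y] mult.assoc)
  also have "\<dots> = b" by (simp only: assms[symmetric] Suc.IH[symmetric])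
  finally show ?case by (rule sym)
qed simp

lemma ex_power_eq:
  fixes x :: "'a::{monoid_mult, finite}"
  obtains i j where "i < j" and "x ^ i = x ^ j"
proof -
  have "\<not> inj (\<lambda>n::nat. x ^ n)"
    using finite_imageD[of "\<lambda>n::nat. x ^ n" UNIV] by auto
  then obtain i j where "i \<noteq> j" "x ^ i = x ^ j" unfolding inj_def by blast
  then show thesis using that by (metis linorder_neqE_nat)
qed

lemma ex_left_power_fixing:
  fixes b x y :: "'a::{monoid_mult, finite}"
  assumes "b = x * b * y"
  obtains k where "x ^ Suc k * b = b"
proof -
  obtain i j where ij: "i < j" "x ^ i = x ^ j" using ex_power_eq by blast
  obtain k where j: "j = Suc k + i" using less_imp_Suc_add[OF ij(1)] by auto
  have "b = x ^ j * b * y ^ i" using two_sided_fix_power[OF assms, of i] unfolding ij(2) .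
  also have "\<dots> = x ^ Suc k * (x ^ i * b * y ^ i)" by (simp only: j power_add mult.assoc)
  also have "\<dots> = x ^ Suc k * b" by (simp only: two_sided_fix_power[OF assms, of i, symmetric])
  finally show thesis by (rule that[OF sym])
qed

lemma ex_right_power_fixing:
  fixes b x y :: "'a::{monoid_mult, finite}"
  assumes "b = x * b * y"
  obtains k where "b * y ^ Suc k = b"
proof -
  obtain i j where ij: "i < j" "y ^ i = y ^ j" using ex_power_eq by blast
  obtain k where j: "j = i + Suc k" using less_imp_Suc_add[OF ij(1)] by auto
  have "b = x ^ i * b * y ^ j" using two_sided_fix_power[OF assms, of i] unfolding ij(2) .
  also have "\<dots> = (x ^ i * b * y ^ i) * y ^ Suc k" by (simp only: j power_add mult.assoc)
  also have "\<dots> = b * y ^ Suc k" by (simp only: two_sided_fix_power[OF assms, of i, symmetric])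
  finally show thesis by (rule that[OF sym])
qed

lemma J_le_mult_left_imp_left_multiple:
  fixes a b :: "'a::{monoid_mult, finite}"
  assumes "J_le b (a * b)"
  obtains u where "b = u * (a * b)"
proof -
  obtain p q where "b = p * (a * b) * q"
    using assms unfolding J_le_iff by blast
  then have "b = (p * a) * b * q" unfolding mult.assoc .
  then obtain k where "(p * a) ^ Suc k * b = b" by (rule ex_left_power_fixing)
  then have "b = ((p * a) ^ k * p) * (a * b)" by (simp only: power_Suc2 mult.assoc)
  then show thesis by (rule that)
qed

lemma J_le_mult_right_imp_right_multiple:
  fixes a b :: "'a::{monoid_mult, finite}"
  assumes "J_le b (b * a)"
  obtains u where "b = (b * a) * u"
proof -
  obtain p q where "b = p * (b * a) * q"
    using assms unfolding J_le_iff by blast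
  then have "b = p * b * (a * q)" unfolding mult.assoc .
  then obtain k where "b * (a * q) ^ Suc k = b" by (rule ex_right_power_fixing)
  then have "b = (b * a) * (q * (a * q) ^ k)" by (simp only: power_Suc mult.assoc)
  then show thesis by (rule that)
qed

theorem lemma4p2:
  fixes a b c :: "'a::{monoid_mult, finite}"
  assumes "totally_ordered_monoid TYPE('a)"
    and "J_le b a"
  shows "(a * b * c = a * b \<longrightarrow> b * c = b) \<and> (c * b * a = b * a \<longrightarrow> c * b = b)"
proof (intro conjI impI)
  assume abc: "a * b * c = a * b"
  obtain u where u: "b = u * (a * b)"
    by (rule J_le_mult_left_imp_left_multiple[OF J_le_mult_of_totally_ordered(1)[OF assms]])
  have "b * c = u * (a * b * c)" by (subst u) (simp add: mult.assoc)
  also have "\<dots> = b" by (simp only: abc u[symmetric])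
  finally show "b * c = b" .
next
  assume cba: "c * b * a = b * a"
  obtain u where u: "b = (b * a) * u"
    by (rule J_le_mult_right_imp_right_multiple[OF J_le_mult_of_totally_ordered(2)[OF assms]])
  have "c * b = (c * b * a) * u" by (subst u) (simp add: mult.assoc)
  also have "\<dots> = b" by (simp only: cba u[symmetric])
  finally show "c * b = b" .
qed

end
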